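(* Let $k\geq 3$ be an integer, let $G$ be a graph, and let $G'$ be the graph obtained from $G$ by the $k$-edge-gadget transformation (with respect to any choice of orientations). Then $G$ admits a proper $k$-coloring if and only if $G'$ admits a $k$-partial $k$-coloring.
   Context: A $k$-partial $c$-coloring of a graph $G=(V,E)$ is a map $\gamma:V\to\{1,\dots,c\}$ such that every vertex $v$ has at least $\min\{k,\deg_G(v)\}$ neighbors $u$ with $\gamma(u)\neq\gamma(v)$. The $k$-edge-gadget transformation: given a graph $G$ and, for each edge $\{u,v\}\in E(G)$, a fixed choice of ordered pair $(u,v)$, the graph $G'$ is obtained from $G$ by keeping all vertices of $G$, deleting every edge $\{u,v\}$ of $G$, and for each such edge adding $k$ new vertices $(u,v,1),\dots,(u,v,k)$ that form a clique $K_k$, together with the edges $\{u,(u,v,j)\}$ for $j=1,\dots,k-1$ and the edge $\{v,(u,v,k)\}$. (The gadget vertices of distinct edges are distinct.) *)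

theory Defs
  imports Main
begin

definition graph :: "'a set \<Rightarrow> 'a set set \<Rightarrow> bool" where
  "graph V E \<longleftrightarrow> finite V \<and> (\<forall>e\<in>E. e \<subseteq> V \<and> card e = 2)"

definition nbrs :: "'a set set \<Rightarrow> 'a \<Rightarrow> 'a set" where
  "nbrs E v = {u. {v, u} \<in> E}"

definition deg :: "'a set set \<Rightarrow> 'a \<Rightarrow> nat" where
  "deg E v = card (nbrs E v)"

definition proper_coloring :: "'a set \<Rightarrow> 'a set set \<Rightarrow> nat \<Rightarrow> ('a \<Rightarrow> nat) \<Rightarrow> bool" where
  "proper_coloring V E c \<gamma> \<longleftrightarrow>
     (\<forall>v\<in>V. \<gamma> v \<in> {1..c}) \<and> (\<forall>u v. {u, v} \<in> E \<longrightarrow> \<gamma> u \<noteq> \<gamma> v)"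

definition partial_coloring :: "nat \<Rightarrow> 'a set \<Rightarrow> 'a set set \<Rightarrow> nat \<Rightarrow> ('a \<Rightarrow> nat) \<Rightarrow> bool" where
  "partial_coloring k V E c \<gamma> \<longleftrightarrow>
     (\<forall>v\<in>V. \<gamma> v \<in> {1..c}) \<and>
     (\<forall>v\<in>V. card {u \<in> nbrs E v. \<gamma> u \<noteq> \<gamma> v} \<ge> min k (deg E v))"

definition orientation :: "'a set set \<Rightarrow> ('a \<times> 'a) set \<Rightarrow> bool" where
  "orientation E D \<longleftrightarrow> (\<forall>(u, v)\<in>D. {u, v} \<in> E) \<and>
     (\<forall>e\<in>E. \<exists>!p. p \<in> D \<and> {fst p, snd p} = e)"

datatype 'a gvert = Orig 'a | Gad 'a 'a nat

definition gadget_V :: "nat \<Rightarrow> 'a set \<Rightarrow> ('a \<times> 'a) set \<Rightarrow> 'a gvert set" where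
  "gadget_V k V D = Orig ` V \<union> {Gad u v j | u v j. (u, v) \<in> D \<and> 1 \<le> j \<and> j \<le> k}"

definition gadget_E :: "nat \<Rightarrow> ('a \<times> 'a) set \<Rightarrow> 'a gvert set set" where
  "gadget_E k D =
     {{Gad u v i, Gad u v j} | u v i j. (u, v) \<in> D \<and> 1 \<le> i \<and> i \<le> k \<and> 1 \<le> j \<and> j \<le> k \<and> i \<noteq> j}
   \<union> {{Orig u, Gad u v j} | u v j. (u, v) \<in> D \<and> 1 \<le> j \<and> j \<le> k - 1}
   \<union> {{Orig v, Gad u v k} | u v. (u, v) \<in> D}"

end

theory Submission
  imports Defs
begin

text \<open>Every gadget vertex has at most \<open>k\<close> neighbours, so in a \<open>k\<close>-partial colouring all of
them get colours different from its own. Hence the \<open>k\<close> clique vertices of the gadget of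
\<open>(u, v)\<close> use all \<open>k\<close> colours; \<open>u\<close> avoids the colours of \<open>(u, v, 1), \<dots>, (u, v, k - 1)\<close>, so it
shares the colour of \<open>(u, v, k)\<close>, which differs from the colour of \<open>v\<close>. Conversely, a proper
colouring of \<open>G\<close> extends to a proper colouring of \<open>G'\<close>, and a proper colouring is \<open>k\<close>-partial
for every \<open>k\<close>.\<close>

lemma proper_coloring_imp_partial_coloring:
  assumes "proper_coloring V E c \<gamma>"
  shows "partial_coloring k V E c \<gamma>"
proof -
  have "\<gamma> u \<noteq> \<gamma> v" if "u \<in> nbrs E v" for u v
  proof -
    have "{v, u} \<in> E" using that unfolding nbrs_def by simp
    then have "\<gamma> v \<noteq> \<gamma> u" using assms unfolding proper_coloring_def by blast
    then show ?thesis by simp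
  qed
  then have "{u \<in> nbrs E v. \<gamma> u \<noteq> \<gamma> v} = nbrs E v" for v
    by blast
  then show ?thesis
    using assms unfolding partial_coloring_def proper_coloring_def deg_def by simp
qed

lemma partial_coloring_low_degree_nbr:
  assumes "partial_coloring k V E c \<gamma>" "v \<in> V" "finite (nbrs E v)" "deg E v \<le> k"
    and "u \<in> nbrs E v"
  shows "\<gamma> u \<noteq> \<gamma> v"
proof -
  have "min k (deg E v) \<le> card {u \<in> nbrs E v. \<gamma> u \<noteq> \<gamma> v}"
    using assms(1,2) unfolding partial_coloring_def by simp
  with assms(4) have "card (nbrs E v) \<le> card {u \<in> nbrs E v. \<gamma> u \<noteq> \<gamma> v}"
    unfolding deg_def by simp
  then have "{u \<in> nbrs E v. \<gamma> u \<noteq> \<gamma> v} = nbrs E v"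
    by (intro card_seteq[OF assms(3)]) auto
  then show ?thesis using assms(5) by blast
qed

lemma orientation_arc_edge:
  assumes "graph V E" "orientation E D" "(u, v) \<in> D"
  shows "{u, v} \<in> E" "u \<in> V" "v \<in> V"
proof -
  show "{u, v} \<in> E" using assms(2,3) unfolding orientation_def by auto
  then show "u \<in> V" "v \<in> V" using assms(1) unfolding graph_def by auto
qed

lemma orientation_edge_arc:
  assumes "orientation E D" "{u, v} \<in> E"
  obtains a b where "(a, b) \<in> D" "{a, b} = {u, v}"
proof -
  obtain p where "p \<in> D" "{fst p, snd p} = {u, v}"
    using assms unfolding orientation_def by (meson ex1_implies_ex)
  then show thesis using that[of "fst p" "snd p"] by simp
qed

lemma gadget_E_cliqueI:
  "\<lbrakk>(u, v) \<in> D; i \<in> {1..k}; j \<in> {1..k}; i \<noteq> j\<rbrakk> \<Longrightarrow> {Gad u v i, Gad u v j} \<in> gadget_E k D"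
  unfolding gadget_E_def by auto

lemma gadget_E_tailI:
  assumes "(u, v) \<in> D" "j \<in> {1..<k}"
  shows "{Orig u, Gad u v j} \<in> gadget_E k D"
proof -
  have "1 \<le> j \<and> j \<le> k - 1" using assms(2) by auto
  then show ?thesis using assms(1) unfolding gadget_E_def by blast
qed

lemma gadget_E_headI: "(u, v) \<in> D \<Longrightarrow> {Orig v, Gad u v k} \<in> gadget_E k D"
  unfolding gadget_E_def by auto

lemma gadget_E_cases:
  assumes "e \<in> gadget_E k D"
  obtains (clique) u v i j where "e = {Gad u v i, Gad u v j}" "(u, v) \<in> D"
      "i \<in> {1..k}" "j \<in> {1..k}" "i \<noteq> j"
    | (tail) u v j where "e = {Orig u, Gad u v j}" "(u, v) \<in> D" "j \<in> {1..<k}"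
    | (head) u v where "e = {Orig v, Gad u v k}" "(u, v) \<in> D"
  using assms unfolding gadget_E_def
proof (elim UnE CollectE exE conjE)
  fix u v i j assume "e = {Gad u v i, Gad u v j}" "(u, v) \<in> D"
    "1 \<le> i" "i \<le> k" "1 \<le> j" "j \<le> k" "i \<noteq> j"
  then show thesis using clique by simp
next
  fix u v j assume "e = {Orig u, Gad u v j}" "(u, v) \<in> D" "1 \<le> j" "j \<le> k - 1"
  then show thesis using tail by simp
next
  fix u v assume "e = {Orig v, Gad u v k}" "(u, v) \<in> D"
  then show thesis using head by simp
qed

lemma nbrs_gadget_Gad:
  assumes "(a, b) \<in> D" "j \<in> {1..k}"
  shows "nbrs (gadget_E k D) (Gad a b j) =
           Gad a b ` ({1..k} - {j}) \<union> {if j < k then Orig a else Orig b}"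
proof
  show "nbrs (gadget_E k D) (Gad a b j) \<subseteq>
          Gad a b ` ({1..k} - {j}) \<union> {if j < k then Orig a else Orig b}"
  proof
    fix y assume "y \<in> nbrs (gadget_E k D) (Gad a b j)"
    then have "{Gad a b j, y} \<in> gadget_E k D" unfolding nbrs_def by simp
    then show "y \<in> Gad a b ` ({1..k} - {j}) \<union> {if j < k then Orig a else Orig b}"
      by (cases rule: gadget_E_cases) (use assms(2) in \<open>auto simp: doubleton_eq_iff\<close>)
  qed
  have "{Gad a b j, if j < k then Orig a else Orig b} \<in> gadget_E k D"
    using assms gadget_E_tailI[of a b D j k] gadget_E_headI[of a b D k]
    by (auto simp: insert_commute)
  then show "Gad a b ` ({1..k} - {j}) \<union> {if j < k then Orig a else Orig b} \<subseteq>
               nbrs (gadget_E k D) (Gad a b j)"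
    using assms gadget_E_cliqueI[of a b D j k] unfolding nbrs_def by auto
qed

lemma Orig_in_gadget_V: "v \<in> V \<Longrightarrow> Orig v \<in> gadget_V k V D"
  unfolding gadget_V_def by blast

lemma Gad_in_gadget_V: "\<lbrakk>(u, v) \<in> D; j \<in> {1..k}\<rbrakk> \<Longrightarrow> Gad u v j \<in> gadget_V k V D"
  unfolding gadget_V_def atLeastAtMost_iff by blast

lemma gadget_Gad_degree:
  assumes "(a, b) \<in> D" "j \<in> {1..k}"
  shows "finite (nbrs (gadget_E k D) (Gad a b j))" "deg (gadget_E k D) (Gad a b j) \<le> k"
proof -
  let ?C = "Gad a b ` ({1..k} - {j})" and ?x = "if j < k then Orig a else Orig b"
  show "finite (nbrs (gadget_E k D) (Gad a b j))" using nbrs_gadget_Gad[OF assms] by simp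
  have "card ?C \<le> k - 1"
    using card_image_le[of "{1..k} - {j}" "Gad a b"] assms(2) by simp
  moreover have "card (?C \<union> {?x}) \<le> card ?C + card {?x}" by (rule card_Un_le)
  moreover have "card {?x} = 1" by simp
  ultimately have "card (?C \<union> {?x}) \<le> k" using assms(2) by auto
  then show "deg (gadget_E k D) (Gad a b j) \<le> k" unfolding deg_def nbrs_gadget_Gad[OF assms] .
qed

lemma partial_coloring_gadget_nbr:
  assumes "partial_coloring k (gadget_V k V D) (gadget_E k D) c \<gamma>" "(a, b) \<in> D" "j \<in> {1..k}"
    and "y \<in> nbrs (gadget_E k D) (Gad a b j)"
  shows "\<gamma> y \<noteq> \<gamma> (Gad a b j)"
  using partial_coloring_low_degree_nbr[OF assms(1) Gad_in_gadget_V[OF assms(2,3)]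
      gadget_Gad_degree[OF assms(2,3)] assms(4)] .

lemma partial_coloring_gadget_clique_surj:
  assumes "partial_coloring k (gadget_V k V D) (gadget_E k D) k \<gamma>" "(a, b) \<in> D"
  shows "(\<lambda>j. \<gamma> (Gad a b j)) ` {1..k} = {1..k}"
proof (rule endo_inj_surj)
  have "\<gamma> (Gad a b j) \<in> {1..k}" if "j \<in> {1..k}" for j
    using assms(1) Gad_in_gadget_V[OF assms(2) that] unfolding partial_coloring_def by simp
  then show "(\<lambda>j. \<gamma> (Gad a b j)) ` {1..k} \<subseteq> {1..k}" by blast
  show "inj_on (\<lambda>j. \<gamma> (Gad a b j)) {1..k}"
  proof (rule inj_onI)
    fix i j assume ij: "i \<in> {1..k}" "j \<in> {1..k}" "\<gamma> (Gad a b i) = \<gamma> (Gad a b j)"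
    show "i = j"
    proof (rule ccontr)
      assume "i \<noteq> j"
      then have "Gad a b i \<in> nbrs (gadget_E k D) (Gad a b j)"
        using nbrs_gadget_Gad[OF assms(2) ij(2)] ij(1) by blast
      then show False using partial_coloring_gadget_nbr[OF assms ij(2)] ij(3) by blast
    qed
  qed
qed simp

lemma partial_coloring_gadget_separates:
  assumes pc: "partial_coloring k (gadget_V k V D) (gadget_E k D) k \<gamma>"
    and ab: "(a, b) \<in> D" and "a \<in> V"
  shows "\<gamma> (Orig a) \<noteq> \<gamma> (Orig b)"
proof -
  have "\<gamma> (Orig a) \<in> {1..k}"
    using pc Orig_in_gadget_V[OF assms(3)] unfolding partial_coloring_def by blast
  then obtain i where i: "i \<in> {1..k}" "\<gamma> (Orig a) = \<gamma> (Gad a b i)"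
    using partial_coloring_gadget_clique_surj[OF pc ab] by (metis imageE)
  have "i = k"
  proof (rule ccontr)
    assume "i \<noteq> k"
    then have "Orig a \<in> nbrs (gadget_E k D) (Gad a b i)"
      using nbrs_gadget_Gad[OF ab i(1)] i(1) by auto
    then show False using partial_coloring_gadget_nbr[OF pc ab i(1)] i(2) by blast
  qed
  moreover have "Orig b \<in> nbrs (gadget_E k D) (Gad a b k)"
    using nbrs_gadget_Gad[OF ab, of k k] i(1) by auto
  ultimately show ?thesis using partial_coloring_gadget_nbr[OF pc ab, of k "Orig b"] i by auto
qed

lemma partial_coloring_gadget_imp_proper_coloring:
  assumes "graph V E" "orientation E D"
    and pc: "partial_coloring k (gadget_V k V D) (gadget_E k D) k \<gamma>"
  shows "proper_coloring V E k (\<gamma> \<circ> Orig)"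
  unfolding proper_coloring_def
proof (intro conjI ballI allI impI)
  fix v assume "v \<in> V"
  then have "Orig v \<in> gadget_V k V D" by (rule Orig_in_gadget_V)
  then show "(\<gamma> \<circ> Orig) v \<in> {1..k}" using pc unfolding partial_coloring_def comp_def by blast
next
  fix u v assume "{u, v} \<in> E"
  then obtain a b where ab: "(a, b) \<in> D" "{a, b} = {u, v}"
    using orientation_edge_arc[OF assms(2)] by blast
  then have "\<gamma> (Orig a) \<noteq> \<gamma> (Orig b)"
    using partial_coloring_gadget_separates[OF pc] orientation_arc_edge[OF assms(1,2)] by blast
  with ab(2) show "(\<gamma> \<circ> Orig) u \<noteq> (\<gamma> \<circ> Orig) v" by (auto simp: doubleton_eq_iff)
qed

text \<open>\<open>(u, v, k)\<close> repeats the colour of \<open>u\<close>; \<open>(u, v, 1), \<dots>, (u, v, k - 1)\<close> receive the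
remaining colours \<open>{1..k} - {c u}\<close> in increasing order.\<close>
definition gadget_coloring :: "nat \<Rightarrow> ('a \<Rightarrow> nat) \<Rightarrow> 'a gvert \<Rightarrow> nat" where
  "gadget_coloring k c x = (case x of
      Orig w \<Rightarrow> c w
    | Gad u v j \<Rightarrow> if j = k then c u else if j < c u then j else j + 1)"

lemma proper_coloring_gadget_coloring:
  assumes "graph V E" "orientation E D" "proper_coloring V E k c"
  shows "proper_coloring (gadget_V k V D) (gadget_E k D) k (gadget_coloring k c)"
proof -
  have arc: "c u \<in> {1..k}" "c u \<noteq> c v" if "(u, v) \<in> D" for u v
    using orientation_arc_edge[OF assms(1,2) that] assms(3) unfolding proper_coloring_def by auto
  have "gadget_coloring k c x \<in> {1..k}" if "x \<in> gadget_V k V D" for x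
    using that assms(3) arc unfolding gadget_V_def proper_coloring_def gadget_coloring_def
    by auto
  moreover have "gadget_coloring k c x \<noteq> gadget_coloring k c y" if "{x, y} \<in> gadget_E k D" for x y
    using that
  proof (cases rule: gadget_E_cases)
    case (clique u v i j)
    then show ?thesis
      using arc[OF clique(2)] by (auto simp: doubleton_eq_iff gadget_coloring_def split: if_splits)
  next
    case (tail u v j)
    then show ?thesis
      using arc[OF tail(2)] by (auto simp: doubleton_eq_iff gadget_coloring_def split: if_splits)
  next
    case (head u v)
    then show ?thesis using arc[OF head(2)] by (auto simp: doubleton_eq_iff gadget_coloring_def)
  qed
  ultimately show ?thesis unfolding proper_coloring_def by blast
qed

theorem lemma3:
  fixes k :: nat and V :: "'a set" and E :: "'a set set" and D :: "('a \<times> 'a) set"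
  assumes "k \<ge> 3" and "graph V E" and "orientation E D"
  shows "(\<exists>\<gamma>. proper_coloring V E k \<gamma>) \<longleftrightarrow>
         (\<exists>\<gamma>. partial_coloring k (gadget_V k V D) (gadget_E k D) k \<gamma>)"
proof
  assume "\<exists>\<gamma>. proper_coloring V E k \<gamma>"
  then obtain c where "proper_coloring V E k c" ..
  then have "proper_coloring (gadget_V k V D) (gadget_E k D) k (gadget_coloring k c)"
    using proper_coloring_gadget_coloring assms(2,3) by blast
  then show "\<exists>\<gamma>. partial_coloring k (gadget_V k V D) (gadget_E k D) k \<gamma>"
    using proper_coloring_imp_partial_coloring by blast
next
  assume "\<exists>\<gamma>. partial_coloring k (gadget_V k V D) (gadget_E k D) k \<gamma>"
  then obtain \<gamma> where "partial_coloring k (gadget_V k V D) (gadget_E k D) k \<gamma>" ..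
  then show "\<exists>\<gamma>. proper_coloring V E k \<gamma>"
    using partial_coloring_gadget_imp_proper_coloring assms(2,3) by blast
qed

end
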